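(* Let $U\supseteq U'$ and $V$ be finitely generated free abelian groups and let $f:U\times V\to\mathbb{Z}$ be a bilinear function whose restriction to $U'\times V$ has rank at least two. Then for every $u\in U$ the set $f(u+U',V)=\{f(u+u',v)\mid u'\in U',v\in V\}\subseteq\mathbb{Z}$ is a subgroup of $\mathbb{Z}$ containing $f(U',V)$.
   Context: The rank of a bilinear function $U'\times V\to\mathbb{Z}$ is the rank of its matrix with respect to bases of $U'$ and $V$. *)

theory Defs
  imports "Jordan_Normal_Form.DL_Rank"
begin

text \<open>Finitely generated free abelian groups are modelled as \<open>\<int>^m\<close>, i.e. the
  integer vectors \<open>carrier_vec m\<close>.  A subgroup of an abelian group given as a set.\<close>

definition int_subgroup :: "int set \<Rightarrow> bool" where
  "int_subgroup S \<longleftrightarrow> 0 \<in> S \<and> (\<forall>x\<in>S. \<forall>y\<in>S. x + y \<in> S) \<and> (\<forall>x\<in>S. - x \<in> S)"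

definition vec_subgroup :: "nat \<Rightarrow> int vec set \<Rightarrow> bool" where
  "vec_subgroup m W \<longleftrightarrow> W \<subseteq> carrier_vec m \<and> 0\<^sub>v m \<in> W
     \<and> (\<forall>x\<in>W. \<forall>y\<in>W. x + y \<in> W) \<and> (\<forall>x\<in>W. - x \<in> W)"

definition int_comb :: "nat \<Rightarrow> int vec list \<Rightarrow> (nat \<Rightarrow> int) \<Rightarrow> int vec" where
  "int_comb m bs c = vec m (\<lambda>j. \<Sum>i<length bs. c i * (bs ! i) $ j)"

definition is_Z_basis :: "nat \<Rightarrow> int vec set \<Rightarrow> int vec list \<Rightarrow> bool" where
  "is_Z_basis m W bs \<longleftrightarrow> set bs \<subseteq> carrier_vec m
     \<and> (\<forall>c. int_comb m bs c = 0\<^sub>v m \<longrightarrow> (\<forall>i<length bs. c i = 0))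
     \<and> W = {int_comb m bs c | c. True}"

definition bilinear_on :: "nat \<Rightarrow> nat \<Rightarrow> (int vec \<Rightarrow> int vec \<Rightarrow> int) \<Rightarrow> bool" where
  "bilinear_on m n f \<longleftrightarrow>
     (\<forall>u1\<in>carrier_vec m. \<forall>u2\<in>carrier_vec m. \<forall>v\<in>carrier_vec n. f (u1 + u2) v = f u1 v + f u2 v)
   \<and> (\<forall>u\<in>carrier_vec m. \<forall>v1\<in>carrier_vec n. \<forall>v2\<in>carrier_vec n. f u (v1 + v2) = f u v1 + f u v2)"

text \<open>Matrix of \<open>f\<close> restricted to \<open>W \<times> \<int>^n\<close> w.r.t. the basis \<open>bs\<close> of \<open>W\<close>
  and the standard basis of \<open>\<int>^n\<close>, and its rank (rank of an integer matrix,
  computed over \<open>\<rat>\<close>).\<close>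
definition restr_matrix :: "nat \<Rightarrow> (int vec \<Rightarrow> int vec \<Rightarrow> int) \<Rightarrow> int vec list \<Rightarrow> rat mat" where
  "restr_matrix n f bs = mat (length bs) n (\<lambda>(i, j). rat_of_int (f (bs ! i) (unit_vec n j)))"

definition restr_rank :: "nat \<Rightarrow> nat \<Rightarrow> (int vec \<Rightarrow> int vec \<Rightarrow> int) \<Rightarrow> int vec set \<Rightarrow> nat" where
  "restr_rank m n f W = (let bs = (SOME bs. is_Z_basis m W bs)
     in vec_space.rank (length bs) (restr_matrix n f bs))"

end

(*
  Let T = f(u + U', V).  Since f(x, -v) = -f(x, v), T is symmetric, and because f is not of
  product form a(q) s(v) on U' x V (rank at least two), T contains a positive element.  Let
  g = f(x0, v0) be the least one, with x0 in u + U'.  Division with remainder in the second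
  argument shows that g divides f(x0, V), and every v splits as w + k v0 with f(x0, w) = 0.
  For p in U' and such a w with b = f(p, w) nonzero, put a = f(p, v0): the values
  f(x0 + t p, alpha v0 + beta w) = alpha (g + t a) + beta (t b) show that T contains
  gcd(g + t a, t b), and t can be chosen to make this gcd equal to gcd(g, a, b).  Minimality
  of g then forces g | a and g | b.  The rank hypothesis supplies such a pair (p, w), from
  which g | f(U', V) follows, and hence T = g Z contains f(U', V).
*)

theory Submission
  imports Defs "HOL-Computational_Algebra.Primes"
begin

text \<open>Stands in for rank at most one: only the implication to \<open>restr_rank \<le> 1\<close> is used, so
  integer-valued factors suffice.\<close>

definition is_product_form :: "nat \<Rightarrow> int vec set \<Rightarrow> (int vec \<Rightarrow> int vec \<Rightarrow> int) \<Rightarrow> bool" where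
  "is_product_form n W f \<longleftrightarrow> (\<exists>a s. \<forall>q\<in>W. \<forall>v\<in>carrier_vec n. f q v = a q * s v)"

lemma additive_smult_int:
  fixes \<phi> :: "int vec \<Rightarrow> int"
  assumes add: "\<And>x y. x \<in> carrier_vec n \<Longrightarrow> y \<in> carrier_vec n \<Longrightarrow> \<phi> (x + y) = \<phi> x + \<phi> y"
    and v: "v \<in> carrier_vec n"
  shows "\<phi> (k \<cdot>\<^sub>v v) = k * \<phi> v"
proof -
  have zero: "\<phi> (0\<^sub>v n) = 0"
    using add[of "0\<^sub>v n" "0\<^sub>v n"] by simp
  have nonneg: "\<phi> (int j \<cdot>\<^sub>v v) = int j * \<phi> v" for j
  proof (induction j)
    case 0
    have "0 \<cdot>\<^sub>v v = 0\<^sub>v n"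
      using v by (intro eq_vecI) auto
    then show ?case
      using zero by simp
  next
    case (Suc j)
    have "int (Suc j) \<cdot>\<^sub>v v = v + int j \<cdot>\<^sub>v v"
      by (simp add: add_smult_distrib_vec)
    then show ?case
      using Suc add v by (simp add: algebra_simps)
  qed
  show ?thesis
  proof (cases "0 \<le> k")
    case True
    then show ?thesis
      using nonneg[of "nat k"] by simp
  next
    case False
    have "k \<cdot>\<^sub>v v + (- k) \<cdot>\<^sub>v v = 0\<^sub>v n"
      using v by (intro eq_vecI) auto
    then have "\<phi> (k \<cdot>\<^sub>v v) + \<phi> ((- k) \<cdot>\<^sub>v v) = 0"
      using add v zero by (metis smult_carrier_vec)
    then show ?thesis
      using nonneg[of "nat (- k)"] False by simp
  qed
qed

lemma bilinear_on_add_left: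
  assumes "bilinear_on m n f" "x \<in> carrier_vec m" "y \<in> carrier_vec m" "v \<in> carrier_vec n"
  shows "f (x + y) v = f x v + f y v"
  using assms unfolding bilinear_on_def by blast

lemma bilinear_on_add_right:
  assumes "bilinear_on m n f" "x \<in> carrier_vec m" "v \<in> carrier_vec n" "w \<in> carrier_vec n"
  shows "f x (v + w) = f x v + f x w"
  using assms unfolding bilinear_on_def by blast

lemma bilinear_on_smult_left:
  assumes "bilinear_on m n f" "x \<in> carrier_vec m" "v \<in> carrier_vec n"
  shows "f (k \<cdot>\<^sub>v x) v = k * f x v"
  using additive_smult_int[of m "\<lambda>x. f x v"] bilinear_on_add_left assms by blast

lemma bilinear_on_smult_right:
  assumes "bilinear_on m n f" "x \<in> carrier_vec m" "v \<in> carrier_vec n"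
  shows "f x (k \<cdot>\<^sub>v v) = k * f x v"
  using additive_smult_int[of n "f x"] bilinear_on_add_right assms by blast

lemma vec_subgroup_smult:
  assumes W: "vec_subgroup m W" and x: "x \<in> W"
  shows "k \<cdot>\<^sub>v x \<in> W"
proof -
  have xm: "x \<in> carrier_vec m"
    using W x unfolding vec_subgroup_def by auto
  have nonneg: "int j \<cdot>\<^sub>v x \<in> W" for j
  proof (induction j)
    case 0
    have "0 \<cdot>\<^sub>v x = 0\<^sub>v m"
      using xm by (intro eq_vecI) auto
    then show ?case
      using W unfolding vec_subgroup_def by simp
  next
    case (Suc j)
    have "int (Suc j) \<cdot>\<^sub>v x = x + int j \<cdot>\<^sub>v x"
      by (simp add: add_smult_distrib_vec)
    then show ?case
      using Suc W x unfolding vec_subgroup_def by simp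
  qed
  show ?thesis
  proof (cases "0 \<le> k")
    case True
    then show ?thesis
      using nonneg[of "nat k"] by simp
  next
    case False
    have "k \<cdot>\<^sub>v x = - ((- k) \<cdot>\<^sub>v x)"
      by (intro eq_vecI) auto
    then show ?thesis
      using nonneg[of "nat (- k)"] False W unfolding vec_subgroup_def by simp
  qed
qed

section \<open>Shifting to coprime values\<close>

lemma coprime_if_no_common_prime_divisor:
  fixes a b :: int
  assumes "b \<noteq> 0" and "\<And>p. prime p \<Longrightarrow> p dvd a \<Longrightarrow> p dvd b \<Longrightarrow> False"
  shows "coprime a b"
proof (rule coprimeI)
  fix c assume "c dvd a" "c dvd b"
  show "is_unit c"
  proof (rule ccontr)
    assume "\<not> is_unit c"
    moreover have "c \<noteq> 0"
      using \<open>c dvd b\<close> \<open>b \<noteq> 0\<close> by auto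
    ultimately obtain p where "prime p" "p dvd c"
      using prime_divisor_exists by blast
    then show False
      using assms(2) \<open>c dvd a\<close> \<open>c dvd b\<close> by (meson dvd_trans)
  qed
qed

lemma exists_coprime_shift:
  fixes a d N :: int
  assumes N: "N \<noteq> 0" and gcd: "gcd a (gcd d N) = 1"
  shows "\<exists>t. coprime (a + t * d) N"
proof -
  define P where "P = {p. prime p \<and> p dvd N \<and> \<not> p dvd a}"
  have "finite P"
    unfolding P_def by (rule finite_subset[OF _ finite_prime_divisors[OF N]]) auto
  have "coprime (a + \<Prod>P * d) N"
  proof (rule coprime_if_no_common_prime_divisor[OF N])
    fix p assume p: "prime p" and p_dvd: "p dvd a + \<Prod>P * d" and "p dvd N"
    show False
    proof (cases "p dvd a")
      case True
      then have "p dvd \<Prod>P * d"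
        using p_dvd by (simp add: dvd_add_right_iff)
      moreover have "\<not> p dvd \<Prod>P"
      proof
        assume "p dvd \<Prod>P"
        then obtain q where "q \<in> P" "p dvd q"
          using prime_dvd_prod_iff[OF \<open>finite P\<close> p, of id] by auto
        then show False
          using p True by (auto simp: P_def dest: primes_dvd_imp_eq)
      qed
      ultimately have "p dvd d"
        using p by (simp add: prime_dvd_mult_iff)
      then have "p dvd gcd a (gcd d N)"
        using True \<open>p dvd N\<close> by simp
      then show False
        using gcd p by (simp add: not_prime_unit)
    next
      case False
      then have "p dvd \<Prod>P"
        using p \<open>p dvd N\<close> \<open>finite P\<close> by (intro dvd_prodI) (auto simp: P_def)
      then show False
        using p_dvd False by (simp add: dvd_add_left_iff)
    qed
  qed
  then show ?thesis by blast
qed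

lemma exists_coprime_shift_mult:
  fixes g a b :: int
  assumes g: "g \<noteq> 0" and b: "b \<noteq> 0" and gcd: "gcd g (gcd a b) = 1"
  shows "\<exists>t. coprime (g + t * a) (t * b)"
proof -
  txt \<open>First make \<open>g + t a\<close> coprime to \<open>b\<close>, then move \<open>t\<close> within its class mod \<open>b\<close>
    to make it coprime to \<open>g\<close>.\<close>
  obtain t0 where t0: "coprime (g + t0 * a) b"
    using exists_coprime_shift[OF b] gcd by (metis gcd.assoc gcd.commute)
  have "gcd t0 (gcd b g) = 1"
  proof -
    have "gcd t0 (gcd b g) dvd g + t0 * a" "gcd t0 (gcd b g) dvd b"
      by (meson dvd_add dvd_mult2 dvd_trans gcd_dvd1 gcd_dvd2)+
    then have "is_unit (gcd t0 (gcd b g))"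
      by (rule coprime_common_divisor[OF t0])
    then show ?thesis
      by simp
  qed
  then obtain s where s: "coprime (t0 + s * b) g"
    using exists_coprime_shift[OF g, of t0 b] by metis
  define t where "t = t0 + s * b"
  have "g + t * a = (s * a) * b + (g + t0 * a)"
    by (simp add: t_def algebra_simps)
  then have "gcd b (g + t * a) = gcd b (g + t0 * a)"
    by (simp only: gcd_add_mult)
  then have "coprime (g + t * a) b"
    using t0 by (simp add: coprime_iff_gcd_eq_1 gcd.commute)
  moreover have "gcd t (a * t + g) = gcd t g"
    by (rule gcd_add_mult)
  then have "coprime (g + t * a) t"
    using s unfolding t_def[symmetric]
    by (simp add: coprime_iff_gcd_eq_1 gcd.commute add.commute mult.commute)
  ultimately show ?thesis
    by auto
qed

lemma exists_gcd_shift_eq_gcd: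
  fixes g a b :: int
  assumes g: "g \<noteq> 0" and b: "b \<noteq> 0"
  shows "\<exists>t. gcd (g + t * a) (t * b) = gcd g (gcd a b)"
proof -
  define h where "h = gcd g (gcd a b)"
  have "h > 0"
    using g by (simp add: h_def)
  obtain g' a' b' where g': "g = h * g'" and a': "a = h * a'" and b': "b = h * b'"
    unfolding h_def by (meson dvdE gcd_dvd1 gcd_dvd2 dvd_trans)
  have "h = gcd (h * g') (gcd (h * a') (h * b'))"
    by (subst (1) h_def) (simp only: g' a' b')
  then have "h * gcd g' (gcd a' b') = h"
    using \<open>h > 0\<close> by (simp add: gcd_mult_left)
  then obtain t where t: "coprime (g' + t * a') (t * b')"
    using exists_coprime_shift_mult[of g' b' a'] g b g' b' \<open>h > 0\<close> by auto
  have "gcd (g + t * a) (t * b) = gcd (h * (g' + t * a')) (h * (t * b'))"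
    by (simp add: g' a' b' algebra_simps)
  also have "\<dots> = h * gcd (g' + t * a') (t * b')"
    using \<open>h > 0\<close> by (simp add: gcd_mult_left)
  also have "\<dots> = h"
    using t by simp
  finally show ?thesis
    unfolding h_def by blast
qed

lemma exists_least_positive_int:
  fixes S :: "int set"
  assumes "x \<in> S" and "0 < x"
  shows "\<exists>g\<in>S. 0 < g \<and> (\<forall>t\<in>S. 0 < t \<longrightarrow> g \<le> t)"
  using assms
proof (induction "nat x" arbitrary: x rule: less_induct)
  case less
  show ?case
  proof (cases "\<exists>t\<in>S. 0 < t \<and> t < x")
    case True
    then obtain t where "t \<in> S" "0 < t" "t < x"
      by blast
    then show ?thesis
      using less.hyps[of t] by simp
  next
    case False
    then show ?thesis
      using less.prems by (meson not_less)
  qed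
qed

section \<open>Rank and product form\<close>

lemma Z_basis_nth_mem:
  assumes Z: "is_Z_basis m W bs" and i: "i < length bs"
  shows "bs ! i \<in> W"
proof -
  let ?c = "\<lambda>l. if l = i then 1 else 0"
  have bs_i: "bs ! i \<in> carrier_vec m"
    using Z i unfolding is_Z_basis_def by auto
  have "int_comb m bs ?c = bs ! i"
  proof (rule eq_vecI)
    fix j assume "j < dim_vec (bs ! i)"
    then have "j < m"
      using bs_i by simp
    moreover have "(\<Sum>l<length bs. ?c l * bs ! l $ j) = (\<Sum>l<length bs. if l = i then bs ! l $ j else 0)"
      by (rule sum.cong) auto
    ultimately have "int_comb m bs ?c $ j = (\<Sum>l<length bs. if l = i then bs ! l $ j else 0)"
      unfolding int_comb_def by simp
    then show "int_comb m bs ?c $ j = bs ! i $ j"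
      using i by simp
  qed (use bs_i in \<open>simp add: int_comb_def\<close>)
  then show ?thesis
    using Z unfolding is_Z_basis_def by (metis (mono_tags, lifting) mem_Collect_eq)
qed

lemma restr_rank_le_1_if_product_form:
  assumes "\<exists>bs. is_Z_basis m W bs" and "is_product_form n W f"
  shows "restr_rank m n f W \<le> 1"
proof -
  define bs where "bs = (SOME bs. is_Z_basis m W bs)"
  have Z: "is_Z_basis m W bs"
    unfolding bs_def using assms(1) by (rule someI_ex)
  obtain a s where as: "\<And>q v. q \<in> W \<Longrightarrow> v \<in> carrier_vec n \<Longrightarrow> f q v = a q * s v"
    using assms(2) unfolding is_product_form_def by blast
  have "vec_space.rank (length bs) (restr_matrix n f bs) \<le> 1"
  proof (rule vec_space.rank_le_1_product_entries[where f = "\<lambda>i. rat_of_int (a (bs ! i))"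
        and g = "\<lambda>j. rat_of_int (s (unit_vec n j))"])
    show "restr_matrix n f bs \<in> carrier_mat (length bs) n"
      by (simp add: restr_matrix_def)
    fix i j assume "i < dim_row (restr_matrix n f bs)" and "j < dim_col (restr_matrix n f bs)"
    then have "i < length bs" and "j < n"
      by (auto simp: restr_matrix_def)
    then show "restr_matrix n f bs $$ (i, j) = rat_of_int (a (bs ! i)) * rat_of_int (s (unit_vec n j))"
      using as[OF Z_basis_nth_mem[OF Z]] by (simp add: restr_matrix_def)
  qed
  then show ?thesis
    by (simp add: restr_rank_def bs_def Let_def)
qed

section \<open>The values of a bilinear map on a coset\<close>

locale bilinear_coset =
  fixes m n :: nat and f :: "int vec \<Rightarrow> int vec \<Rightarrow> int" and U' :: "int vec set" and u :: "int vec"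
  assumes subgroup: "vec_subgroup m U'"
    and bilinear: "bilinear_on m n f"
    and u: "u \<in> carrier_vec m"
begin

definition coset_values :: "int set" where
  "coset_values = {f (u + u') v | u' v. u' \<in> U' \<and> v \<in> carrier_vec n}"

lemma U'_carrier: "p \<in> U' \<Longrightarrow> p \<in> carrier_vec m"
  using subgroup unfolding vec_subgroup_def by auto

lemma zero_mem_U': "0\<^sub>v m \<in> U'"
  using subgroup unfolding vec_subgroup_def by auto

lemma add_mem_U': "p \<in> U' \<Longrightarrow> q \<in> U' \<Longrightarrow> p + q \<in> U'"
  using subgroup unfolding vec_subgroup_def by auto

lemma coset_values_memI: "p \<in> U' \<Longrightarrow> v \<in> carrier_vec n \<Longrightarrow> f (u + p) v \<in> coset_values"
  unfolding coset_values_def by blast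

lemma coset_value_split: "p \<in> U' \<Longrightarrow> v \<in> carrier_vec n \<Longrightarrow> f (u + p) v = f u v + f p v"
  using bilinear_on_add_left[OF bilinear u U'_carrier] by blast

lemma coset_values_uminus:
  assumes "t \<in> coset_values"
  shows "- t \<in> coset_values"
proof -
  obtain p v where p: "p \<in> U'" and v: "v \<in> carrier_vec n" and t: "t = f (u + p) v"
    using assms unfolding coset_values_def by blast
  have "f (u + p) ((- 1) \<cdot>\<^sub>v v) = - t"
    using bilinear_on_smult_right[OF bilinear _ v] u U'_carrier[OF p] t by simp
  then show ?thesis
    using coset_values_memI[OF p] v by (metis smult_carrier_vec)
qed

lemma coset_values_has_positive:
  assumes "\<not> is_product_form n U' f"
  shows "\<exists>t\<in>coset_values. 0 < t"
proof -
  have "\<exists>p\<in>U'. \<exists>v\<in>carrier_vec n. f p v \<noteq> 0"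
  proof (rule ccontr)
    assume "\<not> ?thesis"
    then have "is_product_form n U' f"
      unfolding is_product_form_def by (intro exI[of _ "\<lambda>_. 0"]) auto
    with assms show False
      by contradiction
  qed
  then obtain p v where p: "p \<in> U'" and v: "v \<in> carrier_vec n" and "f p v \<noteq> 0"
    by blast
  moreover have "f u v \<in> coset_values" and "f u v + f p v \<in> coset_values"
    using coset_values_memI[OF zero_mem_U' v] coset_values_memI[OF p v] coset_value_split[OF p v] u
    by simp_all
  ultimately obtain t where t: "t \<in> coset_values" and "t \<noteq> 0"
    by (cases "f u v = 0") auto
  then show ?thesis
  proof (cases "0 < t")
    case False
    then show ?thesis
      using coset_values_uminus[OF t] \<open>t \<noteq> 0\<close> by (intro bexI[of _ "- t"]) auto
  qed (use t in blast)
qed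

end

locale bilinear_coset_least = bilinear_coset +
  fixes p0 v0 :: "int vec"
  assumes p0: "p0 \<in> U'"
    and v0: "v0 \<in> carrier_vec n"
    and positive: "0 < f (u + p0) v0"
    and least_positive: "\<And>t. t \<in> coset_values \<Longrightarrow> 0 < t \<Longrightarrow> f (u + p0) v0 \<le> t"
begin

abbreviation x0 :: "int vec" where "x0 \<equiv> u + p0"

abbreviation g :: int where "g \<equiv> f x0 v0"

lemma x0_carrier: "x0 \<in> carrier_vec m"
  using u U'_carrier[OF p0] by simp

lemma shifted_values_mem:
  assumes p: "p \<in> U'" and v: "v \<in> carrier_vec n"
  shows "f (x0 + p) v \<in> coset_values"
proof -
  have "x0 + p = u + (p0 + p)"
    using u U'_carrier[OF p0] U'_carrier[OF p] by (simp add: assoc_add_vec)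
  then show ?thesis
    using coset_values_memI[OF add_mem_U'[OF p0 p] v] by simp
qed

lemma base_row_shift:
  assumes v: "v \<in> carrier_vec n"
  shows "f x0 (v + (- (f x0 v div g)) \<cdot>\<^sub>v v0) = f x0 v mod g"
  using bilinear_on_add_right[OF bilinear x0_carrier v] bilinear_on_smult_right[OF bilinear x0_carrier v0] v v0
  by (simp add: minus_div_mult_eq_mod[symmetric])

lemma dvd_base_row:
  assumes v: "v \<in> carrier_vec n"
  shows "g dvd f x0 v"
proof -
  have "f x0 v mod g \<in> coset_values"
    using shifted_values_mem[OF zero_mem_U', of "v + (- (f x0 v div g)) \<cdot>\<^sub>v v0"] v v0 x0_carrier
      base_row_shift[OF v] by simp
  then have "f x0 v mod g = 0"
    using least_positive[of "f x0 v mod g"] positive pos_mod_sign[of g "f x0 v"] pos_mod_bound[of g "f x0 v"]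
    by linarith
  then show ?thesis
    by (simp add: mod_eq_0_iff_dvd)
qed

lemma kernel_shift:
  assumes v: "v \<in> carrier_vec n"
  shows "f x0 (v + (- (f x0 v div g)) \<cdot>\<^sub>v v0) = 0"
  using base_row_shift[OF v] dvd_base_row[OF v] by (simp add: mod_eq_0_iff_dvd)

lemma value_decomposition:
  assumes p: "p \<in> carrier_vec m" and v: "v \<in> carrier_vec n"
  shows "f p v = f p (v + (- (f x0 v div g)) \<cdot>\<^sub>v v0) + (f x0 v div g) * f p v0"
  using bilinear_on_add_right[OF bilinear p v] bilinear_on_smult_right[OF bilinear p v0] v v0
  by simp

lemma dvd_if_kernel_nonzero:
  assumes p: "p \<in> U'" and w: "w \<in> carrier_vec n" and "f x0 w = 0" and "f p w \<noteq> 0"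
  shows "g dvd f p v0 \<and> g dvd f p w"
proof -
  define a b where "a = f p v0" and "b = f p w"
  define h where "h = gcd g (gcd a b)"
  obtain t where t: "gcd (g + t * a) (t * b) = h"
    using exists_gcd_shift_eq_gcd[of g b a] positive assms(4) unfolding h_def b_def by auto
  txt \<open>Along the line \<open>x0 + t p\<close> the values contain the ideal generated by \<open>g + t a\<close>
    and \<open>t b\<close>.\<close>
  obtain \<alpha> \<beta> where \<alpha>\<beta>: "\<alpha> * (g + t * a) + \<beta> * (t * b) = h"
    using bezout_int t by metis
  have pm: "p \<in> carrier_vec m"
    using U'_carrier[OF p] .
  have "f (x0 + t \<cdot>\<^sub>v p) (\<alpha> \<cdot>\<^sub>v v0 + \<beta> \<cdot>\<^sub>v w)
      = f x0 (\<alpha> \<cdot>\<^sub>v v0 + \<beta> \<cdot>\<^sub>v w) + t * f p (\<alpha> \<cdot>\<^sub>v v0 + \<beta> \<cdot>\<^sub>v w)"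
    using bilinear_on_add_left[OF bilinear x0_carrier] bilinear_on_smult_left[OF bilinear pm] pm v0 w
    by simp
  also have "\<dots> = \<alpha> * (g + t * a) + \<beta> * (t * b)"
    using bilinear_on_add_right[OF bilinear x0_carrier] bilinear_on_add_right[OF bilinear pm]
      bilinear_on_smult_right[OF bilinear x0_carrier] bilinear_on_smult_right[OF bilinear pm]
      v0 w \<open>f x0 w = 0\<close> unfolding a_def b_def by (simp add: algebra_simps)
  finally have "h \<in> coset_values"
    using shifted_values_mem[OF vec_subgroup_smult[OF subgroup p]] v0 w \<alpha>\<beta>
    by (metis add_carrier_vec smult_carrier_vec)
  moreover have "0 < h"
    using positive unfolding h_def by simp
  ultimately have "g \<le> h"
    by (rule least_positive)
  moreover have "h \<le> g"
    using positive unfolding h_def by (simp add: zdvd_imp_le)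
  ultimately have "h = g"
    by simp
  then show ?thesis
    unfolding h_def a_def b_def by (metis gcd_dvd1 gcd_dvd2 dvd_trans)
qed

context
  assumes not_product: "\<not> is_product_form n U' f"
begin

lemma exists_kernel_witness: "\<exists>q\<in>U'. \<exists>w\<in>carrier_vec n. f x0 w = 0 \<and> f q w \<noteq> 0"
proof (rule ccontr)
  assume no_witness: "\<not> ?thesis"
  have "f q v = f q v0 * (f x0 v div g)" if q: "q \<in> U'" and v: "v \<in> carrier_vec n" for q v
  proof -
    have "f q (v + (- (f x0 v div g)) \<cdot>\<^sub>v v0) = 0"
      using no_witness q v v0 kernel_shift[OF v] by auto
    then show ?thesis
      using value_decomposition[OF U'_carrier[OF q] v] by simp
  qed
  then have "is_product_form n U' f"
    unfolding is_product_form_def by (intro exI[of _ "\<lambda>q. f q v0"] exI[of _ "\<lambda>v. f x0 v div g"]) simp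
  then show False
    using not_product by contradiction
qed

lemma dvd_values_at_v0:
  assumes p: "p \<in> U'"
  shows "g dvd f p v0"
proof -
  obtain q w where q: "q \<in> U'" and w: "w \<in> carrier_vec n" and "f x0 w = 0" and "f q w \<noteq> 0"
    using exists_kernel_witness by blast
  show ?thesis
  proof (cases "f p w = 0")
    case False
    then show ?thesis
      using dvd_if_kernel_nonzero[OF p w \<open>f x0 w = 0\<close>] by blast
  next
    case True
    have "f (p + q) w = f q w" and "f (p + q) v0 = f p v0 + f q v0"
      using bilinear_on_add_left[OF bilinear U'_carrier[OF p] U'_carrier[OF q]] w v0 True by simp_all
    then show ?thesis
      using dvd_if_kernel_nonzero[OF add_mem_U'[OF p q] w \<open>f x0 w = 0\<close>]
        dvd_if_kernel_nonzero[OF q w \<open>f x0 w = 0\<close> \<open>f q w \<noteq> 0\<close>]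
        \<open>f q w \<noteq> 0\<close> by (simp add: dvd_add_left_iff)
  qed
qed

lemma dvd_values:
  assumes p: "p \<in> U'" and v: "v \<in> carrier_vec n"
  shows "g dvd f p v"
proof -
  let ?w = "v + (- (f x0 v div g)) \<cdot>\<^sub>v v0"
  have "g dvd f p ?w"
    using dvd_if_kernel_nonzero[OF p _ kernel_shift[OF v]] v v0 by (cases "f p ?w = 0") auto
  then show ?thesis
    using value_decomposition[OF U'_carrier[OF p] v] dvd_values_at_v0[OF p] by (metis dvd_add dvd_mult)
qed

lemma coset_values_eq_multiples: "coset_values = {t. g dvd t}"
proof
  show "coset_values \<subseteq> {t. g dvd t}"
  proof
    fix t assume "t \<in> coset_values"
    then obtain p v where p: "p \<in> U'" and v: "v \<in> carrier_vec n" and "t = f (u + p) v"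
      unfolding coset_values_def by blast
    then have "t = f x0 v - f p0 v + f p v"
      using coset_value_split[OF p v] coset_value_split[OF p0 v] by simp
    then show "t \<in> {t. g dvd t}"
      using dvd_base_row[OF v] dvd_values[OF p0 v] dvd_values[OF p v] by simp
  qed
  show "{t. g dvd t} \<subseteq> coset_values"
  proof
    fix t assume "t \<in> {t. g dvd t}"
    then obtain c where "t = c * g"
      by (metis dvdE mem_Collect_eq mult.commute)
    then have "f x0 (c \<cdot>\<^sub>v v0) = t"
      using bilinear_on_smult_right[OF bilinear x0_carrier v0] by simp
    then show "t \<in> coset_values"
      using coset_values_memI[OF p0, of "c \<cdot>\<^sub>v v0"] v0 by simp
  qed
qed

end

end

theorem mainTheorem11:
  fixes m n :: nat and U' :: "int vec set" and f :: "int vec \<Rightarrow> int vec \<Rightarrow> int"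
  assumes "vec_subgroup m U'"
    and "\<exists>bs. is_Z_basis m U' bs"
    and "bilinear_on m n f"
    and "restr_rank m n f U' \<ge> 2"
  shows "\<forall>u\<in>carrier_vec m.
           int_subgroup {f (u + u') v | u' v. u' \<in> U' \<and> v \<in> carrier_vec n}
         \<and> {f u' v | u' v. u' \<in> U' \<and> v \<in> carrier_vec n}
             \<subseteq> {f (u + u') v | u' v. u' \<in> U' \<and> v \<in> carrier_vec n}"
proof
  fix u :: "int vec" assume u: "u \<in> carrier_vec m"
  interpret bilinear_coset m n f U' u
    using assms(1,3) u by unfold_locales
  have not_product: "\<not> is_product_form n U' f"
  proof
    assume "is_product_form n U' f"
    then have "restr_rank m n f U' \<le> 1"
      by (rule restr_rank_le_1_if_product_form[OF assms(2)])
    with assms(4) show False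
      by simp
  qed
  obtain g0 where "g0 \<in> coset_values" and "0 < g0" and "\<forall>t\<in>coset_values. 0 < t \<longrightarrow> g0 \<le> t"
    using coset_values_has_positive[OF not_product] exists_least_positive_int by meson
  moreover obtain p0 v0 where "p0 \<in> U'" and "v0 \<in> carrier_vec n" and "g0 = f (u + p0) v0"
    using \<open>g0 \<in> coset_values\<close> unfolding coset_values_def by blast
  ultimately interpret bilinear_coset_least m n f U' u p0 v0
    by unfold_locales simp_all
  have value_set: "{f (u + u') v | u' v. u' \<in> U' \<and> v \<in> carrier_vec n} = {t. g0 dvd t}"
    using coset_values_eq_multiples[OF not_product] \<open>g0 = f (u + p0) v0\<close>
    unfolding coset_values_def by simp
  show "int_subgroup {f (u + u') v | u' v. u' \<in> U' \<and> v \<in> carrier_vec n}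
      \<and> {f u' v | u' v. u' \<in> U' \<and> v \<in> carrier_vec n}
          \<subseteq> {f (u + u') v | u' v. u' \<in> U' \<and> v \<in> carrier_vec n}"
    unfolding value_set int_subgroup_def using dvd_values[OF not_product] \<open>g0 = f (u + p0) v0\<close>
    by auto
qed

end
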